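(* Let $\mathcal{B}$ be a prime Banach algebra over $\mathbb{R}$ or $\mathbb{C}$, and let $\mathcal{H}_1,\mathcal{H}_2$ be non-empty open subsets of $\mathcal{B}$. Suppose $\mathcal{B}$ admits a continuous generalized derivation $F$ associated with a derivation $d$ that is not injective, such that for every $(x,y)\in\mathcal{H}_1\times\mathcal{H}_2$ there exist positive integers $p=p(x,y)$, $q=q(x,y)$ with $$F(x^{p}\circ y^{q})+[x^{p},y^{q}]\in Z(\mathcal{B}).$$ Then $\mathcal{B}$ is commutative or $d(Z(\mathcal{B}))=\{0\}$.
   Context: $Z(\mathcal{B})$ denotes the center of $\mathcal{B}$. For $x,y\in\mathcal{B}$, $x\circ y=xy+yx$ and $[x,y]=xy-yx$. $\mathcal{B}$ is prime if $x\mathcal{B}y=\{0\}$ implies $x=0$ or $y=0$. A derivation is an additive map $d:\mathcal{B}\to\mathcal{B}$ with $d(xy)=d(x)y+xd(y)$ for all $x,y$. A generalized derivation associated with the derivation $d$ is an additive map $F:\mathcal{B}\to\mathcal{B}$ with $F(xy)=F(x)y+xd(y)$ for all $x,y\in\mathcal{B}$. *)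

theory Defs
  imports "HOL-Analysis.Analysis"
begin

text \<open>Positive powers in a (possibly non-unital) algebra: ppow x n = x^n for n >= 1.
  The value at n = 0 is irrelevant (only positive exponents are used).\<close>
fun ppow :: "'a::semigroup_mult \<Rightarrow> nat \<Rightarrow> 'a" where
  "ppow x 0 = x"
| "ppow x (Suc 0) = x"
| "ppow x (Suc (Suc n)) = ppow x (Suc n) * x"

definition center :: "'a::semigroup_mult set" where
  "center = {z. \<forall>x. z * x = x * z}"

definition jordan :: "'a::{semigroup_mult,plus} \<Rightarrow> 'a \<Rightarrow> 'a" where
  "jordan x y = x * y + y * x"

definition commutator :: "'a::{semigroup_mult,minus} \<Rightarrow> 'a \<Rightarrow> 'a" where
  "commutator x y = x * y - y * x"

definition prime_ring :: "'a::ring itself \<Rightarrow> bool" where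
  "prime_ring _ \<longleftrightarrow> (\<forall>x y::'a. (\<forall>b. x * b * y = 0) \<longrightarrow> x = 0 \<or> y = 0)"

definition additive :: "('a::ring \<Rightarrow> 'a) \<Rightarrow> bool" where
  "additive f \<longleftrightarrow> (\<forall>x y. f (x + y) = f x + f y)"

definition derivation :: "('a::ring \<Rightarrow> 'a) \<Rightarrow> bool" where
  "derivation d \<longleftrightarrow> additive d \<and> (\<forall>x y. d (x * y) = d x * y + x * d y)"

definition gen_derivation :: "('a::ring \<Rightarrow> 'a) \<Rightarrow> ('a \<Rightarrow> 'a) \<Rightarrow> bool" where
  "gen_derivation F d \<longleftrightarrow> derivation d \<and> additive F \<and>
     (\<forall>x y. F (x * y) = F x * y + x * d y)"

end

theory Submission
  imports Defs
begin

text \<open>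
  The sets of pairs \<open>(x, y)\<close> satisfying the hypothesis for fixed exponents \<open>(p, q)\<close> are closed
  and cover \<open>H\<^sub>1 \<times> H\<^sub>2\<close>, so by Baire one of them contains a product \<open>U \<times> V\<close> of non-empty open
  sets. A continuous additive map is real-linear, and \<open>t \<mapsto> (y\<^sub>0 + t w)\<^sup>q\<close> is a polynomial in
  \<open>t\<close> with top coefficient \<open>w\<^sup>q\<close>; a polynomial that is central for all small \<open>t\<close> has central
  coefficients. With \<open>X = x\<^sup>p\<close>, \<open>x \<in> U\<close>, this gives \<open>F(X w\<^sup>q) \<in> Z\<close> for all central \<open>w\<close>.
  Applied to \<open>w = z\<close> and \<open>w = z\<^sup>2\<close> for a central \<open>z\<close> with \<open>d z \<noteq> 0\<close>, the generalized-derivation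
  rule isolates \<open>X d(z\<^sup>q) z\<^sup>q \<in> Z\<close>, and primeness cancels the non-zero central factor
  \<open>d(z\<^sup>q) z\<^sup>q\<close>. The same polynomial argument spreads centrality of \<open>x\<^sup>p\<close> from \<open>U\<close> to all of
  the algebra, and the linear coefficient of \<open>(z + t b)\<^sup>p\<close>, namely \<open>p z\<^sup>p\<^sup>-\<^sup>1 b\<close>, then forces
  every \<open>b\<close> to be central.
\<close>

lemma ppow_Suc: "n > 0 \<Longrightarrow> ppow x (Suc n) = ppow x n * x"
  by (cases n) auto

lemma ppow_mult_self_commute: "ppow x n * x = x * ppow x n"
  by (induction x n rule: ppow.induct) (simp_all add: mult.assoc)

lemma ppow_mult_self: "ppow (x * x) n = ppow x n * ppow x n"
proof (induction n)
  case (Suc n)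
  show ?case
  proof (cases "n = 0")
    case False
    have "ppow (x * x) (Suc n) = ppow x n * (ppow x n * x) * x"
      using False Suc by (simp add: ppow_Suc mult.assoc)
    also have "\<dots> = ppow x n * (x * ppow x n) * x"
      by (simp only: ppow_mult_self_commute)
    also have "\<dots> = (ppow x n * x) * (ppow x n * x)"
      by (simp add: mult.assoc)
    finally show ?thesis using False by (simp add: ppow_Suc)
  qed simp
qed simp

lemma center_iff: "z \<in> center \<longleftrightarrow> (\<forall>x. z * x = x * z)"
  by (simp add: center_def)

lemma center_diff: "a \<in> center \<Longrightarrow> b \<in> center \<Longrightarrow> (a - b :: 'a::ring) \<in> center"
  by (simp add: center_def algebra_simps)

lemma center_mult:
  assumes "a \<in> center" "b \<in> center"
  shows "(a * b :: 'a::ring) \<in> center"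
  unfolding center_iff
proof
  fix x
  have "a * b * x = a * (x * b)"
    using assms(2) by (simp add: center_iff mult.assoc)
  also have "\<dots> = (x * a) * b"
    using assms(1) by (simp add: center_iff flip: mult.assoc)
  finally show "a * b * x = x * (a * b)"
    by (simp add: mult.assoc)
qed

lemma center_scaleR: "a \<in> center \<Longrightarrow> (c *\<^sub>R a :: 'a::real_algebra) \<in> center"
  by (simp add: center_def)

lemma ppow_in_center: "(z::'a::ring) \<in> center \<Longrightarrow> ppow z n \<in> center"
  by (induction z n rule: ppow.induct) (auto intro: center_mult)

lemma closed_center: "closed (center :: 'a::real_normed_algebra set)"
proof -
  have "center = (\<Inter>b. {z::'a. z * b = b * z})"
    by (auto simp: center_iff)
  also have "closed \<dots>"
    by (intro closed_INT ballI closed_Collect_eq continuous_intros)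
  finally show ?thesis .
qed

subsection \<open>Central elements of a prime ring\<close>

lemma prime_ring_central_mult_eq_0:
  fixes u v :: "'a::ring"
  assumes "prime_ring TYPE('a)" "u \<in> center" "u \<noteq> 0" "u * v = 0"
  shows "v = 0"
proof -
  have "u * b * v = b * (u * v)" for b
    using assms(2) by (simp add: center_iff mult.assoc)
  then show ?thesis
    using assms unfolding prime_ring_def by auto
qed

lemma prime_ring_central_cancel:
  fixes u v :: "'a::ring"
  assumes "prime_ring TYPE('a)" "u \<in> center" "u \<noteq> 0" "u * v \<in> center"
  shows "v \<in> center"
  unfolding center_iff
proof
  fix b
  have "u * (v * b - b * v) = (u * v) * b - b * (u * v)"
    using assms(2) by (simp add: center_iff algebra_simps)
  also have "\<dots> = 0"
    using assms(4) by (simp add: center_iff)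
  finally have "v * b - b * v = 0"
    by (rule prime_ring_central_mult_eq_0[OF assms(1-3)])
  then show "v * b = b * v"
    by simp
qed

lemma prime_ring_ppow_central_neq_0:
  fixes u :: "'a::ring"
  assumes "prime_ring TYPE('a)" "u \<in> center" "u \<noteq> 0"
  shows "ppow u n \<noteq> 0"
proof (induction n)
  case (Suc n)
  show ?case
  proof (cases "n = 0")
    case False
    then have "ppow u (Suc n) = u * ppow u n"
      using assms(2) by (simp add: ppow_Suc center_iff)
    then show ?thesis
      using prime_ring_central_mult_eq_0[OF assms] Suc by auto
  qed (use assms in simp)
qed (use assms in simp)

lemma additive_imp_locale_additive: "Defs.additive f \<Longrightarrow> Modules.additive f"
  by (simp add: Defs.additive_def Modules.additive_def)

lemma linear_of_additive_continuous:
  fixes f :: "'a::real_normed_vector \<Rightarrow> 'b::real_normed_vector"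
  assumes add: "Modules.additive f" and cont: "continuous_on UNIV f"
  shows "linear f"
proof (rule linearI)
  show "f (x + y) = f x + f y" for x y
    by (rule additive.add[OF add])
  fix r :: real and x :: 'a
  have nat: "f (of_nat n *\<^sub>R y) = of_nat n *\<^sub>R f y" for n y
    by (induction n) (simp_all add: additive.zero[OF add] additive.add[OF add] scaleR_add_left)
  have int: "f (of_int m *\<^sub>R y) = of_int m *\<^sub>R f y" for m y
  proof -
    obtain n where "m = int n \<or> m = - int n"
      by (metis int_cases2)
    then show ?thesis
      using nat[of n y] additive.minus[OF add, of "of_nat n *\<^sub>R y"] by auto
  qed
  have rat: "f (s *\<^sub>R x) = s *\<^sub>R f x" if s: "s \<in> \<rat>" for s
  proof -
    obtain a b where ab: "b > 0" "s = of_int a / of_int b"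
      using Rats_cases'[OF s] by blast
    have "of_int b *\<^sub>R f (s *\<^sub>R x) = f (of_int b *\<^sub>R (s *\<^sub>R x))"
      by (rule int[symmetric])
    also have "\<dots> = f (of_int a *\<^sub>R x)"
      using ab by simp
    also have "\<dots> = of_int a *\<^sub>R f x"
      by (rule int)
    finally have "(1 / of_int b) *\<^sub>R (of_int b *\<^sub>R f (s *\<^sub>R x)) = (1 / of_int b) *\<^sub>R (of_int a *\<^sub>R f x)"
      by simp
    then show ?thesis
      using ab by simp
  qed
  have "continuous_on UNIV (\<lambda>s. f (s *\<^sub>R x))"
    by (rule continuous_on_compose2[OF cont]) (auto intro: continuous_intros)
  then have "continuous_on (closure \<rat>) (\<lambda>s. f (s *\<^sub>R x) - s *\<^sub>R f x)"
    unfolding Rats_closure_real by (intro continuous_intros)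
  then have "f (r *\<^sub>R x) - r *\<^sub>R f x = 0"
    by (rule continuous_constant_on_closure) (simp_all add: Rats_closure_real rat)
  then show "f (r *\<^sub>R x) = r *\<^sub>R f x"
    by simp
qed

lemma derivation_zero: "derivation d \<Longrightarrow> d 0 = 0"
  using additive.zero[OF additive_imp_locale_additive] by (auto simp: derivation_def)

lemma derivation_mult: "derivation d \<Longrightarrow> d (x * y) = d x * y + x * d y"
  by (simp add: derivation_def)

lemma derivation_center:
  fixes d :: "'a::ring \<Rightarrow> 'a"
  assumes "derivation d" "z \<in> center"
  shows "d z \<in> center"
  unfolding center_iff
proof
  fix x
  have "d (z * x) = d (x * z)"
    using assms(2) by (simp add: center_iff)
  then have "d z * x + z * d x = d x * z + x * d z"
    by (simp add: derivation_mult[OF assms(1)])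
  then show "d z * x = x * d z"
    using assms(2) by (simp add: center_iff)
qed

lemma derivation_ppow_central:
  fixes d :: "'a::real_algebra \<Rightarrow> 'a"
  assumes "derivation d" "z \<in> center" "n > 0"
  shows "z * d (ppow z n) = of_nat n *\<^sub>R (ppow z n * d z)"
  using assms(3)
proof (induction n)
  case (Suc n)
  show ?case
  proof (cases "n = 0")
    case False
    let ?P = "ppow z n"
    have IH: "z * d ?P = of_nat n *\<^sub>R (?P * d z)"
      using Suc False by simp
    have zc: "\<And>x. z * x = x * z" and dzc: "\<And>x. d z * x = x * d z"
      using assms(2) derivation_center[OF assms(1,2)] by (simp_all add: center_iff)
    have "z * d (ppow z (Suc n)) = (z * d ?P) * z + (z * ?P) * d z"
      using False by (simp add: ppow_Suc derivation_mult[OF assms(1)] algebra_simps)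
    also have "\<dots> = of_nat n *\<^sub>R (?P * z * d z) + ?P * z * d z"
      by (simp add: IH mult.assoc dzc[of z] zc[of ?P])
    also have "\<dots> = of_nat (Suc n) *\<^sub>R (ppow z (Suc n) * d z)"
      using False by (simp add: ppow_Suc algebra_simps)
    finally show ?thesis .
  qed simp
qed simp

subsection \<open>Polynomial curves\<close>

text \<open>The linear coefficient is multiplied by \<open>x\<^sub>0\<close> because \<open>ppow\<close> cannot express the
  exponent \<open>n - 1\<close> when \<open>n = 1\<close>.\<close>

lemma ppow_add_scaleR_expansion:
  fixes x0 a :: "'a::real_algebra"
  assumes "n > 0"
  shows "\<exists>W. (\<forall>t. ppow (x0 + t *\<^sub>R a) n = (\<Sum>k\<le>n. t^k *\<^sub>R W k)) \<and> W n = ppow a n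
     \<and> W 0 = ppow x0 n \<and> (x0 \<in> center \<longrightarrow> x0 * W 1 = of_nat n *\<^sub>R (ppow x0 n * a))"
  using assms
proof (induction n)
  case (Suc n)
  show ?case
  proof (cases "n = 0")
    case True
    show ?thesis
      by (rule exI[of _ "\<lambda>k. if k = 0 then x0 else a"]) (simp add: True)
  next
    case False
    obtain W where W: "\<forall>t. ppow (x0 + t *\<^sub>R a) n = (\<Sum>k\<le>n. t^k *\<^sub>R W k)" "W n = ppow a n"
      "W 0 = ppow x0 n" "x0 \<in> center \<longrightarrow> x0 * W 1 = of_nat n *\<^sub>R (ppow x0 n * a)"
      using Suc False by auto
    define W' where
      "W' k = (if k \<le> n then W k * x0 else 0) + (if 1 \<le> k then W (k - 1) * a else 0)" for k
    have "ppow (x0 + t *\<^sub>R a) (Suc n) = (\<Sum>k\<le>Suc n. t^k *\<^sub>R W' k)" for t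
    proof -
      have "ppow (x0 + t *\<^sub>R a) (Suc n) = (\<Sum>k\<le>n. t^k *\<^sub>R W k) * (x0 + t *\<^sub>R a)"
        using False W(1) by (simp add: ppow_Suc)
      also have "\<dots> = (\<Sum>k\<le>n. t^k *\<^sub>R (W k * x0)) + (\<Sum>k\<le>n. t^(Suc k) *\<^sub>R (W k * a))"
        by (simp add: distrib_left sum_distrib_right scaleR_sum_right mult.commute)
      also have "(\<Sum>k\<le>n. t^k *\<^sub>R (W k * x0))
          = (\<Sum>k\<le>Suc n. t^k *\<^sub>R (if k \<le> n then W k * x0 else 0))"
        by simp
      also have "(\<Sum>k\<le>n. t^(Suc k) *\<^sub>R (W k * a))
          = (\<Sum>k\<le>Suc n. t^k *\<^sub>R (if 1 \<le> k then W (k - 1) * a else 0))"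
        by (simp del: sum.atMost_Suc add: sum.atMost_Suc_shift)
      finally show ?thesis
        by (simp add: W'_def scaleR_add_right sum.distrib)
    qed
    moreover have "x0 * W' 1 = of_nat (Suc n) *\<^sub>R (ppow x0 (Suc n) * a)" if "x0 \<in> center"
    proof -
      have cz: "\<And>y. x0 * y = y * x0"
        using that by (simp add: center_iff)
      have "x0 * W' 1 = (x0 * W 1) * x0 + x0 * ppow x0 n * a"
        using False W(3) by (simp add: W'_def algebra_simps)
      also have "\<dots> = of_nat n *\<^sub>R (ppow x0 n * (a * x0)) + ppow x0 n * x0 * a"
        using W(4) that by (simp add: mult.assoc cz[of "ppow x0 n"])
      also have "\<dots> = of_nat (Suc n) *\<^sub>R (ppow x0 (Suc n) * a)"
        using False by (simp add: ppow_Suc cz[of a, symmetric] mult.assoc algebra_simps)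
      finally show ?thesis .
    qed
    ultimately show ?thesis
      using False W(2,3) by (intro exI[of _ W']) (simp add: W'_def ppow_Suc)
  qed
qed simp

lemma poly_coeffs_eq_0_at_0:
  fixes u :: "nat \<Rightarrow> 'b::real_normed_vector"
  assumes "\<forall>\<^sub>F t in at (0::real). (\<Sum>k\<le>N. t^k *\<^sub>R u k) = 0" and "k \<le> N"
  shows "u k = 0"
  using assms
proof (induction N arbitrary: u k)
  case (Suc N)
  have split: "(\<Sum>k\<le>Suc N. t^k *\<^sub>R u k) = u 0 + t *\<^sub>R (\<Sum>k\<le>N. t^k *\<^sub>R u (Suc k))" for t
    by (simp del: sum.atMost_Suc add: sum.atMost_Suc_shift scaleR_sum_right)
  from Suc.prems(1) have ev: "\<forall>\<^sub>F t in at (0::real). u 0 + t *\<^sub>R (\<Sum>k\<le>N. t^k *\<^sub>R u (Suc k)) = 0"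
    by (simp only: split)
  have "((\<lambda>t. u 0 + t *\<^sub>R (\<Sum>k\<le>N. t^k *\<^sub>R u (Suc k))) \<longlongrightarrow> u 0) (at 0)"
    by (auto intro!: tendsto_eq_intros)
  moreover have "((\<lambda>t. u 0 + t *\<^sub>R (\<Sum>k\<le>N. t^k *\<^sub>R u (Suc k))) \<longlongrightarrow> 0) (at 0)"
    using ev by (rule tendsto_eventually)
  ultimately have u0: "u 0 = 0"
    by (rule tendsto_unique[rotated]) simp
  have "\<forall>\<^sub>F t in at (0::real). t \<noteq> 0"
    by (simp add: eventually_at_filter)
  with ev have "\<forall>\<^sub>F t in at (0::real). (\<Sum>k\<le>N. t^k *\<^sub>R u (Suc k)) = 0"
    by eventually_elim (simp add: u0)
  then show ?case
    using Suc.IH[of "\<lambda>k. u (Suc k)"] Suc.prems(2) u0 by (cases k) auto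
qed simp

lemma poly_coeffs_central_at_0:
  fixes h :: "nat \<Rightarrow> 'a::real_normed_algebra"
  assumes "\<forall>\<^sub>F t in at (0::real). (\<Sum>k\<le>N. t^k *\<^sub>R h k) \<in> center" and "k \<le> N"
  shows "h k \<in> center"
  unfolding center_iff
proof
  fix b
  from assms(1) have "\<forall>\<^sub>F t in at (0::real). (\<Sum>k\<le>N. t^k *\<^sub>R (h k * b - b * h k)) = 0"
    by eventually_elim
      (simp add: center_iff sum_distrib_right sum_distrib_left scaleR_diff_right sum_subtractf)
  from poly_coeffs_eq_0_at_0[OF this assms(2)] show "h k * b = b * h k"
    by simp
qed

lemma eventually_add_scaleR_in_open:
  fixes x a :: "'a::real_normed_vector"
  assumes "open S" "x \<in> S"
  shows "\<forall>\<^sub>F t in at (0::real). x + t *\<^sub>R a \<in> S"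
proof -
  have "((\<lambda>t. x + t *\<^sub>R a) \<longlongrightarrow> x) (at (0::real))"
    by (auto intro!: tendsto_eq_intros)
  then show ?thesis
    using assms by (rule topological_tendstoD)
qed

subsection \<open>The Baire category step\<close>

lemma continuous_on_ppow: "continuous_on UNIV (\<lambda>x::'a::real_normed_algebra. ppow x n)"
  by (induction n rule: ppow.induct) (auto intro!: continuous_intros)

lemma Baire_closed_cover_interior:
  fixes S :: "'i::countable \<Rightarrow> 'a::complete_space set"
  assumes "\<And>i. closed (S i)" "open W" "W \<noteq> {}" "W \<subseteq> (\<Union>i. S i)"
  shows "\<exists>i. interior (S i) \<noteq> {}"
proof (rule ccontr)
  assume "\<not> ?thesis"
  then have "euclidean interior_of (\<Union>i. S i) = {}"
    by (intro Baire_category_alt)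
       (auto simp: completely_metrizable_space_euclidean assms(1) closed_closedin[symmetric])
  moreover have "W \<subseteq> interior (\<Union>i. S i)"
    using assms(2,4) by (rule interior_maximal[rotated])
  ultimately show False
    using assms(3) by simp
qed

lemma Baire_uniform_exponents:
  fixes F :: "'a::{real_normed_algebra,banach} \<Rightarrow> 'a" and H1 H2 :: "'a set"
  assumes "open H1" "H1 \<noteq> {}" "open H2" "H2 \<noteq> {}" and cont: "continuous_on UNIV F"
    and hyp: "\<forall>x\<in>H1. \<forall>y\<in>H2. \<exists>p q. p > 0 \<and> q > 0 \<and>
           F (jordan (ppow x p) (ppow y q)) + commutator (ppow x p) (ppow y q) \<in> center"
  obtains p q U V where "p > 0" "q > 0" "open U" "U \<noteq> {}" "open V" "V \<noteq> {}"
    "\<forall>x\<in>U. \<forall>y\<in>V. F (jordan (ppow x p) (ppow y q)) + commutator (ppow x p) (ppow y q) \<in> center"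
proof -
  define g where "g p q v = F (jordan (ppow (fst v) p) (ppow (snd v) q))
     + commutator (ppow (fst v) p) (ppow (snd v) q)" for p q and v :: "'a \<times> 'a"
  define S where "S pq = {v. fst pq > 0 \<and> snd pq > 0 \<and> g (fst pq) (snd pq) v \<in> center}"
    for pq :: "nat \<times> nat"
  have pow: "continuous_on UNIV (\<lambda>v::'a \<times> 'a. ppow (fst v) p)"
    "continuous_on UNIV (\<lambda>v::'a \<times> 'a. ppow (snd v) q)" for p q
    by (rule continuous_on_compose2[OF continuous_on_ppow]; auto intro: continuous_intros)+
  have cont_g: "continuous_on UNIV (g p q)" for p q
  proof -
    have "continuous_on UNIV (\<lambda>v. F (jordan (ppow (fst v) p) (ppow (snd v) q)))"
      unfolding jordan_def
      by (rule continuous_on_compose2[OF cont]) (auto intro!: continuous_intros pow)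
    then show ?thesis
      unfolding g_def commutator_def by (intro continuous_intros pow)
  qed
  have "closed (S pq)" for pq
  proof (cases "fst pq > 0 \<and> snd pq > 0")
    case True
    then have "S pq = g (fst pq) (snd pq) -` center"
      by (auto simp: S_def)
    then show ?thesis
      using closed_vimage[OF closed_center cont_g] by simp
  qed (auto simp: S_def)
  moreover have "open (H1 \<times> H2)" "H1 \<times> H2 \<noteq> {}"
    using assms(1-4) by (auto intro: open_Times)
  moreover have "H1 \<times> H2 \<subseteq> (\<Union>pq. S pq)"
    using hyp by (force simp: S_def g_def)
  ultimately obtain pq v where "v \<in> interior (S pq)"
    using Baire_closed_cover_interior[of S "H1 \<times> H2"] by blast
  moreover have "open (interior (S pq))"
    by simp
  ultimately obtain U V where UV: "open U" "open V" "v \<in> U \<times> V" "U \<times> V \<subseteq> interior (S pq)"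
    by (blast elim: open_prod_elim)
  then have "\<forall>x\<in>U. \<forall>y\<in>V. 0 < fst pq \<and> 0 < snd pq \<and> g (fst pq) (snd pq) (x, y) \<in> center"
    using interior_subset unfolding S_def by blast
  moreover have "U \<noteq> {}" "V \<noteq> {}"
    using UV(3) by auto
  ultimately show ?thesis
    using UV(1,2) that[of "fst pq" "snd pq" U V] unfolding g_def by auto
qed

subsection \<open>From the identity to commutativity\<close>

lemma jordan_identity_imp_mult_ppow_central:
  fixes F :: "'a::real_normed_algebra \<Rightarrow> 'a"
  assumes "linear F" "open V" "y0 \<in> V" "q > 0"
    and hyp: "\<forall>y\<in>V. F (jordan X (ppow y q)) + commutator X (ppow y q) \<in> center"
    and comm: "ppow w q * X = X * ppow w q"
  shows "F (X * ppow w q) \<in> center"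
proof -
  obtain W where W: "\<forall>t. ppow (y0 + t *\<^sub>R w) q = (\<Sum>k\<le>q. t^k *\<^sub>R W k)" "W q = ppow w q"
    using ppow_add_scaleR_expansion[OF assms(4)] by blast
  define H where "H Y = F (jordan X Y) + commutator X Y" for Y
  have H_poly: "H (\<Sum>k\<le>q. t^k *\<^sub>R W k) = (\<Sum>k\<le>q. t^k *\<^sub>R H (W k))" for t
    using assms(1)
    by (simp add: H_def jordan_def commutator_def sum_distrib_left sum_distrib_right
        scaleR_add_right scaleR_diff_right sum.distrib sum_subtractf linear_sum linear_scale
        linear_add o_def)
  have "H (ppow y q) \<in> center" if "y \<in> V" for y
    using hyp that by (simp add: H_def)
  with eventually_add_scaleR_in_open[OF assms(2,3), of w]
  have "\<forall>\<^sub>F t in at (0::real). (\<Sum>k\<le>q. t^k *\<^sub>R H (W k)) \<in> center"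
    by (auto elim!: eventually_mono simp flip: H_poly W(1))
  then have "H (ppow w q) \<in> center"
    using poly_coeffs_central_at_0[of "\<lambda>k. H (W k)" q q] W(2) by simp
  then have "2 *\<^sub>R F (X * ppow w q) \<in> center"
    using assms(1) comm by (simp add: H_def jordan_def commutator_def scaleR_2 linear_add)
  then show ?thesis
    using center_scaleR[of _ "1/2"] by fastforce
qed

lemma gen_derivation_central_square:
  fixes F d :: "'a::ring \<Rightarrow> 'a"
  assumes gd: "gen_derivation F d" and Uc: "U \<in> center"
  shows "F (X * (U * U)) - U * F (X * U) = (d U * U) * X"
proof -
  have dd: "derivation d" and Fm: "\<And>x y. F (x * y) = F x * y + x * d y"
    using gd by (auto simp: gen_derivation_def)
  have cU: "\<And>y. U * y = y * U"
    using Uc by (simp add: center_iff)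
  have "F (X * (U * U)) = F X * (U * U) + X * (d U * U) + X * (d U * U)"
    using Fm derivation_mult[OF dd, of U U] cU[of "d U"] by (simp add: distrib_left)
  moreover have "U * F (X * U) = F X * (U * U) + X * (d U * U)"
  proof -
    have "U * F (X * U) = U * (F X * U) + U * (X * d U)"
      by (simp add: Fm distrib_left)
    also have "U * (F X * U) = F X * (U * U)"
      by (simp add: cU[of "F X * U"] mult.assoc)
    also have "U * (X * d U) = X * (d U * U)"
      by (simp add: cU[of "X * d U"] mult.assoc)
    finally show ?thesis .
  qed
  moreover have "X * (d U * U) = (d U * U) * X"
    using center_mult[OF derivation_center[OF dd Uc] Uc] by (simp add: center_iff)
  ultimately show ?thesis
    by simp
qed

lemma prime_ring_gen_derivation_cancel:
  fixes F d :: "'a::real_algebra \<Rightarrow> 'a"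
  assumes prime: "prime_ring TYPE('a)" and gd: "gen_derivation F d"
    and "z \<in> center" "d z \<noteq> 0" "q > 0"
    and hyp: "\<And>w. w \<in> center \<Longrightarrow> F (X * ppow w q) \<in> center"
  shows "X \<in> center"
proof -
  have dd: "derivation d"
    using gd by (simp add: gen_derivation_def)
  have "z \<noteq> 0"
    using assms(4) derivation_zero[OF dd] by auto
  define U where "U = ppow z q"
  have Uc: "U \<in> center" and U0: "U \<noteq> 0"
    using ppow_in_center[OF assms(3)] prime_ring_ppow_central_neq_0[OF prime assms(3) \<open>z \<noteq> 0\<close>]
    by (simp_all add: U_def)
  have eUc: "d U * U \<in> center"
    using center_mult[OF derivation_center[OF dd Uc] Uc] .
  have "U * d z \<noteq> 0"
    using prime_ring_central_mult_eq_0[OF prime Uc U0] assms(4) by blast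
  then have "z * d U \<noteq> 0"
    using derivation_ppow_central[OF dd assms(3,5)] assms(5) by (simp add: U_def)
  then have eU0: "d U * U \<noteq> 0"
    using prime_ring_central_mult_eq_0[OF prime Uc U0, of "d U"] Uc by (auto simp: center_iff)
  have "F (X * U) \<in> center" "F (X * (U * U)) \<in> center"
    using hyp[OF assms(3)] hyp[OF center_mult[OF assms(3,3)]]
    by (simp_all add: U_def ppow_mult_self)
  then have "F (X * (U * U)) - U * F (X * U) \<in> center"
    using Uc by (intro center_diff center_mult)
  then have "(d U * U) * X \<in> center"
    by (simp only: gen_derivation_central_square[OF gd Uc])
  then show ?thesis
    by (rule prime_ring_central_cancel[OF prime eUc eU0])
qed

lemma central_of_gen_derivation_identity:
  fixes F d :: "'a::real_normed_algebra \<Rightarrow> 'a"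
  assumes prime: "prime_ring TYPE('a)" and gd: "gen_derivation F d" and lin: "linear F"
    and z: "z \<in> center" "d z \<noteq> 0" and "q > 0" "open V" "y0 \<in> V"
    and hyp: "\<forall>y\<in>V. F (jordan X (ppow y q)) + commutator X (ppow y q) \<in> center"
  shows "X \<in> center"
proof (rule prime_ring_gen_derivation_cancel[OF prime gd z \<open>q > 0\<close>])
  fix w :: 'a
  assume "w \<in> center"
  then have "ppow w q * X = X * ppow w q"
    using ppow_in_center center_iff by blast
  then show "F (X * ppow w q) \<in> center"
    by (rule jordan_identity_imp_mult_ppow_central[OF lin assms(7,8,6) hyp])
qed

lemma ppow_central_of_open:
  fixes S :: "'a::real_normed_algebra set" and a :: 'a
  assumes "open S" "x0 \<in> S" "p > 0" "\<forall>x\<in>S. ppow x p \<in> center"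
  shows "ppow a p \<in> center"
proof -
  obtain W where W: "\<forall>t. ppow (x0 + t *\<^sub>R a) p = (\<Sum>k\<le>p. t^k *\<^sub>R W k)" "W p = ppow a p"
    using ppow_add_scaleR_expansion[OF assms(3)] by blast
  from eventually_add_scaleR_in_open[OF assms(1,2), of a]
  have "\<forall>\<^sub>F t in at (0::real). (\<Sum>k\<le>p. t^k *\<^sub>R W k) \<in> center"
    by eventually_elim (use assms(4) in \<open>simp flip: W(1)\<close>)
  then show ?thesis
    using poly_coeffs_central_at_0[of W p p] W(2) by simp
qed

lemma prime_ring_commutative_of_central_ppow:
  fixes z b :: "'a::real_normed_algebra"
  assumes prime: "prime_ring TYPE('a)" and "z \<in> center" "z \<noteq> 0" "p > 0"
    and central: "\<forall>a::'a. ppow a p \<in> center"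
  shows "b \<in> center"
proof -
  obtain W where W: "\<forall>t. ppow (z + t *\<^sub>R b) p = (\<Sum>k\<le>p. t^k *\<^sub>R W k)"
    "z * W 1 = of_nat p *\<^sub>R (ppow z p * b)"
    using ppow_add_scaleR_expansion[OF assms(4), of z b] assms(2) by blast
  have "\<forall>\<^sub>F t in at (0::real). (\<Sum>k\<le>p. t^k *\<^sub>R W k) \<in> center"
    using central by (simp flip: W(1))
  then have "W 1 \<in> center"
    by (rule poly_coeffs_central_at_0) (use assms(4) in simp)
  then have "(1 / of_nat p) *\<^sub>R (z * W 1) \<in> center"
    using assms(2) by (intro center_scaleR center_mult)
  then have "ppow z p * b \<in> center"
    using W(2) assms(4) by simp
  then show ?thesis
    using prime_ring_central_cancel[OF prime ppow_in_center prime_ring_ppow_central_neq_0]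
      assms(2,3) prime by blast
qed

theorem theorem3p2:
  fixes F d :: "'a::{real_normed_algebra, banach} \<Rightarrow> 'a"
    and H1 H2 :: "'a set"
  assumes "prime_ring TYPE('a)"
    and "open H1" and "H1 \<noteq> {}"
    and "open H2" and "H2 \<noteq> {}"
    and "gen_derivation F d"
    and "continuous_on UNIV F"
    and "\<not> inj d"
    and "\<forall>x\<in>H1. \<forall>y\<in>H2. \<exists>p q. p > 0 \<and> q > 0 \<and>
           F (jordan (ppow x p) (ppow y q)) + commutator (ppow x p) (ppow y q) \<in> center"
  shows "(\<forall>x y::'a. x * y = y * x) \<or> (\<forall>z\<in>center. d z = 0)"
proof (rule disjCI)
  assume "\<not> (\<forall>z\<in>center. d z = 0)"
  then obtain z where z: "z \<in> center" "d z \<noteq> 0"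
    by blast
  obtain p q U V where pq: "p > 0" "q > 0" and UV: "open U" "U \<noteq> {}" "open V" "V \<noteq> {}"
    and hyp: "\<forall>x\<in>U. \<forall>y\<in>V. F (jordan (ppow x p) (ppow y q)) + commutator (ppow x p) (ppow y q) \<in> center"
    using Baire_uniform_exponents[OF assms(2-5,7,9)] by blast
  have lin: "linear F"
    using assms(6,7) additive_imp_locale_additive
    by (auto simp: gen_derivation_def intro: linear_of_additive_continuous)
  obtain y0 where y0: "y0 \<in> V"
    using UV(4) by blast
  have "ppow x p \<in> center" if "x \<in> U" for x
    using central_of_gen_derivation_identity[OF assms(1,6) lin z pq(2) UV(3) y0] hyp that by blast
  then have "ppow a p \<in> center" for a :: 'a
    using ppow_central_of_open[OF UV(1) _ pq(1)] UV(2) by blast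
  moreover have "z \<noteq> 0"
    using z(2) assms(6) derivation_zero by (auto simp: gen_derivation_def)
  ultimately have "b \<in> center" for b :: 'a
    using prime_ring_commutative_of_central_ppow[OF assms(1) z(1) _ pq(1)] by blast
  then show "\<forall>x y::'a. x * y = y * x"
    by (simp add: center_iff)
qed

end
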